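(* Let $\mu,\lambda\in\mathbb{R}$ with $\lambda\neq0$ and $\rho=\mu/\lambda>0$. Let $\tilde\sigma\in\mathbb{C}$, $\sigma=\tilde\sigma/\lambda$, and let $\varphi\in\mathbb{B}$ satisfy $H_{\mu,\lambda}\varphi=\tilde\sigma\varphi$. Fix $a\in\mathbb{R}\setminus\{0\}$, put $\gamma=\rho+ia$ and $\varphi_a(y)=\varphi(a+iy)$ (so that $\varphi_a''(y)-(y-\gamma)\varphi_a'(y)-\frac{i\sigma}{a+iy}\varphi_a(y)=0$). Then $$\lim_{y\to-\infty}e^{-\frac12(y-\gamma)^2}\varphi_a'(y)=0,$$ and consequently, for all $y\le0$, $$\varphi_a'(y)=i\sigma\,e^{\frac12(y-\gamma)^2}\int_{-\infty}^{y}e^{-\frac12(u-\gamma)^2}\frac{\varphi_a(u)}{a+iu}\,du .$$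
   Context: The Bargmann space is $\mathbb{B}=\{\varphi:\mathbb{C}\to\mathbb{C}\text{ entire};\ \int_{\mathbb{C}}|\varphi(z)|^2e^{-|z|^2}\,dx\,dy<\infty\}$. For real $\mu,\lambda$, $H_{\mu,\lambda}=\mu z\frac{d}{dz}+i\lambda\big(z\frac{d^2}{dz^2}+z^2\frac{d}{dz}\big)$. *)

theory Defs
  imports "HOL-Complex_Analysis.Complex_Analysis"
begin

definition bargmann :: "(complex \<Rightarrow> complex) set" where
  "bargmann = {\<phi>. \<phi> holomorphic_on UNIV \<and>
      integrable lborel (\<lambda>z. (cmod (\<phi> z)) ^ 2 * exp (- ((cmod z) ^ 2)))}"

definition H_op :: "real \<Rightarrow> real \<Rightarrow> (complex \<Rightarrow> complex) \<Rightarrow> complex \<Rightarrow> complex" where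
  "H_op mu lam \<phi> z = of_real mu * z * deriv \<phi> z
     + \<i> * of_real lam * (z * deriv (deriv \<phi>) z + z ^ 2 * deriv \<phi> z)"

end

theory Submission
  imports Defs
begin

text \<open>
  Cauchy's formula on the boundary of the square of half-side \<open>s\<close> around \<open>z\<close>, averaged over
  \<open>r/2 \<le> s \<le> r\<close>, bounds \<open>\<bar>\<phi> z\<bar>\<close> by the integral of \<open>\<bar>\<phi>\<bar>\<close> over the square of half-side \<open>r\<close>.
  On that square \<open>\<bar>w\<bar> \<le> \<bar>z\<bar> + 2 r\<close>, and the inequality \<open>2 x \<le> x\<^sup>2 + 1\<close> applied to
  \<open>x = \<bar>\<phi> w\<bar> exp (- \<bar>w\<bar>\<^sup>2 / 2)\<close> turns the weighted \<open>L\<^sup>2\<close> bound of the Bargmann space into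
  \<open>\<bar>\<phi> z\<bar> \<le> K exp ((\<bar>z\<bar> + c)\<^sup>2 / 2)\<close> for every \<open>c > 0\<close>; Cauchy's inequality gives the same for \<open>\<phi>'\<close>.
  On the line \<open>Re z = a\<close> the Gaussian factor has modulus \<open>exp (- ((y - \<rho>)\<^sup>2 - a\<^sup>2) / 2)\<close>, whose
  \<open>- y\<^sup>2 / 2\<close> cancels that growth up to a factor \<open>exp ((\<rho> - c) y)\<close>, which tends to \<open>0\<close> as
  \<open>y \<rightarrow> -\<infinity>\<close> once \<open>c < \<rho>\<close>. Finally, the eigenvalue equation restricted to that line is the
  first-order equation \<open>(exp (- (y - \<gamma>)\<^sup>2 / 2) \<phi>\<^sub>a')' = \<i> \<sigma> exp (- (y - \<gamma>)\<^sup>2 / 2) \<phi>\<^sub>a / (a + \<i> y)\<close>,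
  and integrating it from \<open>-\<infinity>\<close> gives the formula.
\<close>

lemma contour_integral_linepath_same_Im:
  assumes "Im z = c" "Im z' = c" "Re z = a" "Re z' = b" "a < b"
  shows "contour_integral (linepath z z') f = integral {a..b} (\<lambda>x. f (Complex x c))"
proof -
  have zz': "z = Complex a c" "z' = Complex b c"
    using assms by (auto simp: complex_eq_iff)
  have "contour_integral (linepath z z') f = (z' - z) * integral {0..1} (\<lambda>x. f (linepath z z' x))"
    by (simp add: contour_integral_integral)
  also have "z' - z = of_real (b - a)"
    by (simp add: zz' complex_eq_iff)
  also have "integral {0..1} (\<lambda>x. f (linepath z z' x)) = integral {0..1} (\<lambda>x. f (Complex (a + (b - a) * x) c))"
    by (intro integral_cong arg_cong[of _ _ f]) (simp add: zz' linepath_def complex_eq_iff algebra_simps)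
  also have "\<dots> = integral {0..(b - a) / (b - a)} (\<lambda>x. f (Complex (a + (b - a) * x) c))"
    using \<open>a < b\<close> by simp
  also have "{0..(b - a) / (b - a)} = (\<lambda>x. x / (b - a)) ` {0..b - a}"
    using \<open>a < b\<close> by simp
  also have "integral \<dots> (\<lambda>x. f (Complex (a + (b - a) * x) c)) =
             integral {a-a..b-a} (\<lambda>x. f (Complex (x + a) c)) / of_real (b - a)"
    using \<open>a < b\<close> by (subst integral_stretch_real) (auto simp: scaleR_conv_of_real add_ac)
  also have "\<dots> = integral {a..b} (\<lambda>x. f (Complex x c)) / of_real (b - a)"
    by (subst integral_shift_real_ivl) (rule refl)
  finally show ?thesis
    using \<open>a < b\<close> by simp
qed

lemma contour_integral_rectpath:
  assumes f: "continuous_on (path_image (rectpath a1 a3)) f"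
    and "Re a1 < Re a3" "Im a1 < Im a3"
  shows "contour_integral (rectpath a1 a3) f =
      integral {Re a1..Re a3} (\<lambda>x. f (Complex x (Im a1)))
    - integral {Re a1..Re a3} (\<lambda>x. f (Complex x (Im a3)))
    + \<i> * integral {Im a1..Im a3} (\<lambda>y. f (Complex (Re a3) y))
    - \<i> * integral {Im a1..Im a3} (\<lambda>y. f (Complex (Re a1) y))"
proof -
  define a2 a4 where "a2 = Complex (Re a3) (Im a1)" and "a4 = Complex (Re a1) (Im a3)"
  have img: "path_image (rectpath a1 a3) =
      closed_segment a1 a2 \<union> closed_segment a2 a3 \<union> closed_segment a3 a4 \<union> closed_segment a4 a1"
    by (simp add: rectpath_def Let_def path_image_join Un_assoc a2_def a4_def)
  have c12: "continuous_on (closed_segment a1 a2) f" and c23: "continuous_on (closed_segment a2 a3) f"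
    and c34: "continuous_on (closed_segment a3 a4) f" and c41: "continuous_on (closed_segment a4 a1) f"
    using f by (auto intro: continuous_on_subset simp: img)
  have "contour_integral (rectpath a1 a3) f = contour_integral (linepath a1 a2) f
      + contour_integral (linepath a2 a3) f - contour_integral (linepath a4 a3) f
      - contour_integral (linepath a1 a4) f"
    using c12 c23 c34 c41
    by (simp add: rectpath_def Let_def a2_def [symmetric] a4_def [symmetric] valid_path_join
        contour_integrable_continuous_linepath contour_integral_reverse_linepath)
  also have "\<dots> = integral {Re a1..Re a3} (\<lambda>x. f (Complex x (Im a1)))
    + \<i> * integral {Im a1..Im a3} (\<lambda>y. f (Complex (Re a3) y))
    - integral {Re a1..Re a3} (\<lambda>x. f (Complex x (Im a3)))
    - \<i> * integral {Im a1..Im a3} (\<lambda>y. f (Complex (Re a1) y))"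
    using assms(2,3)
    by (simp add: a2_def a4_def contour_integral_linepath_same_Im contour_integral_linepath_same_Re)
  finally show ?thesis
    by (simp add: algebra_simps)
qed

lemma norm_integral_divide_le:
  fixes g h :: "real \<Rightarrow> complex"
  assumes g: "continuous_on {a..b} g" and h: "continuous_on {a..b} h" and s: "0 < s"
    and far: "\<And>x. x \<in> {a..b} \<Longrightarrow> s \<le> cmod (h x)"
  shows "s * cmod (integral {a..b} (\<lambda>x. g x / h x)) \<le> integral {a..b} (\<lambda>x. cmod (g x))"
proof -
  have "cmod (integral {a..b} (\<lambda>x. g x / h x)) \<le> integral {a..b} (\<lambda>x. cmod (g x) / s)"
  proof (rule integral_norm_bound_integral)
    show "(\<lambda>x. g x / h x) integrable_on {a..b}"
      using far s by (intro integrable_continuous_interval continuous_intros g h) force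
    show "(\<lambda>x. cmod (g x) / s) integrable_on {a..b}"
      using s by (intro integrable_continuous_interval continuous_intros g) auto
  next
    fix x assume "x \<in> {a..b}"
    then show "cmod (g x / h x) \<le> cmod (g x) / s"
      using far s by (simp add: norm_divide frac_le)
  qed
  then show ?thesis
    using s by (simp add: field_simps)
qed

lemma Cauchy_integral_formula_square:
  fixes \<phi> :: "complex \<Rightarrow> complex" and z :: complex and s :: real
  assumes holo: "\<phi> holomorphic_on UNIV" and s: "0 < s"
  defines "f \<equiv> \<lambda>w. \<phi> w / (w - z)"
  shows "2 * pi * \<i> * \<phi> z =
      integral {Re z - s..Re z + s} (\<lambda>x. f (Complex x (Im z - s)))
    - integral {Re z - s..Re z + s} (\<lambda>x. f (Complex x (Im z + s)))
    + \<i> * integral {Im z - s..Im z + s} (\<lambda>y. f (Complex (Re z + s) y))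
    - \<i> * integral {Im z - s..Im z + s} (\<lambda>y. f (Complex (Re z - s) y))"
proof -
  define a1 a3 where "a1 = Complex (Re z - s) (Im z - s)" and "a3 = Complex (Re z + s) (Im z + s)"
  have le: "Re a1 \<le> Re a3" "Im a1 \<le> Im a3"
    using s by (auto simp: a1_def a3_def)
  have zin: "z \<in> box a1 a3"
    using s by (auto simp: in_box_complex_iff a1_def a3_def)
  then have znot: "z \<notin> path_image (rectpath a1 a3)"
    using path_image_rectpath_inter_box[OF le] by blast
  have "(f has_contour_integral (2 * pi * \<i> * winding_number (rectpath a1 a3) z * \<phi> z)) (rectpath a1 a3)"
    unfolding f_def by (rule Cauchy_integral_formula_global[OF open_UNIV holo]) (use znot in auto)
  then have "2 * pi * \<i> * \<phi> z = contour_integral (rectpath a1 a3) f"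
    using winding_number_rectpath[OF zin] by (simp add: contour_integral_unique)
  moreover have "continuous_on (path_image (rectpath a1 a3)) f"
    using znot holomorphic_on_imp_continuous_on[OF holo] unfolding f_def
    by (intro continuous_intros) (auto intro: continuous_on_subset)
  ultimately show ?thesis
    using s by (simp add: contour_integral_rectpath a1_def a3_def)
qed

lemma norm_le_integrals_square_boundary:
  fixes \<phi> :: "complex \<Rightarrow> complex"
  assumes holo: "\<phi> holomorphic_on UNIV" and s: "0 < s"
  shows "2 * pi * s * cmod (\<phi> z) \<le>
      integral {Re z - s..Re z + s} (\<lambda>x. cmod (\<phi> (Complex x (Im z - s))))
    + integral {Re z - s..Re z + s} (\<lambda>x. cmod (\<phi> (Complex x (Im z + s))))
    + integral {Im z - s..Im z + s} (\<lambda>y. cmod (\<phi> (Complex (Re z + s) y)))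
    + integral {Im z - s..Im z + s} (\<lambda>y. cmod (\<phi> (Complex (Re z - s) y)))"
proof -
  let ?f = "\<lambda>w. \<phi> w / (w - z)"
  define B T where "B = integral {Re z - s..Re z + s} (\<lambda>x. ?f (Complex x (Im z - s)))"
    and "T = integral {Re z - s..Re z + s} (\<lambda>x. ?f (Complex x (Im z + s)))"
  define R L where "R = integral {Im z - s..Im z + s} (\<lambda>y. ?f (Complex (Re z + s) y))"
    and "L = integral {Im z - s..Im z + s} (\<lambda>y. ?f (Complex (Re z - s) y))"
  have cphi: "continuous_on A \<phi>" for A
    using holo by (meson holomorphic_on_imp_continuous_on continuous_on_subset subset_UNIV)
  have "2 * pi * cmod (\<phi> z) = cmod (B - T + \<i> * R - \<i> * L)"
    using arg_cong[OF Cauchy_integral_formula_square[OF holo s, of z], of cmod]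
    by (simp add: norm_mult B_def T_def R_def L_def)
  also have "\<dots> \<le> cmod B + cmod T + cmod R + cmod L"
    using norm_triangle_ineq4[of "B - T + \<i> * R" "\<i> * L"] norm_triangle_ineq[of "B - T" "\<i> * R"]
      norm_triangle_ineq4[of B T]
    by (simp add: norm_mult)
  finally have main: "2 * pi * s * cmod (\<phi> z) \<le> s * cmod B + s * cmod T + s * cmod R + s * cmod L"
    using mult_left_mono[of _ _ s] s by (fastforce simp: algebra_simps)
  have horiz_bound: "s * cmod (integral {Re z - s..Re z + s} (\<lambda>x. ?f (Complex x y)))
      \<le> integral {Re z - s..Re z + s} (\<lambda>x. cmod (\<phi> (Complex x y)))" if "\<bar>y - Im z\<bar> = s" for y
    using abs_Im_le_cmod[of "Complex _ y - z"] that s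
    by (intro norm_integral_divide_le) (auto simp: Complex_eq intro!: continuous_intros continuous_on_compose2[OF cphi])
  have vert_bound: "s * cmod (integral {Im z - s..Im z + s} (\<lambda>y. ?f (Complex x y)))
      \<le> integral {Im z - s..Im z + s} (\<lambda>y. cmod (\<phi> (Complex x y)))" if "\<bar>x - Re z\<bar> = s" for x
    using abs_Re_le_cmod[of "Complex x _ - z"] that s
    by (intro norm_integral_divide_le) (auto simp: Complex_eq intro!: continuous_intros continuous_on_compose2[OF cphi])
  show ?thesis
    using main horiz_bound[of "Im z - s"] horiz_bound[of "Im z + s"] vert_bound[of "Re z + s"]
      vert_bound[of "Re z - s"] s
    unfolding B_def T_def R_def L_def by simp
qed

lemma lborel_complex_eq_distr_pair:
  "lborel = distr (lborel \<Otimes>\<^sub>M lborel) borel (\<lambda>p::real \<times> real. Complex (fst p) (snd p))"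
proof (rule lborel_eqI)
  fix l u :: complex
  assume le: "\<And>b. b \<in> Basis \<Longrightarrow> l \<bullet> b \<le> u \<bullet> b"
  have m: "(\<lambda>p::real \<times> real. Complex (fst p) (snd p)) \<in> borel_measurable (lborel \<Otimes>\<^sub>M lborel)"
    unfolding Complex_eq by measurable
  have pre: "(\<lambda>p::real \<times> real. Complex (fst p) (snd p)) -` box l u \<inter> space (lborel \<Otimes>\<^sub>M lborel)
      = {Re l<..<Re u} \<times> {Im l<..<Im u}"
    by (auto simp: box_def Basis_complex_def space_pair_measure)
  have "Re l \<le> Re u" "Im l \<le> Im u"
    using le[of 1] le[of \<i>] by (auto simp: Basis_complex_def)
  then show "emeasure (distr (lborel \<Otimes>\<^sub>M lborel) borel (\<lambda>p. Complex (fst p) (snd p))) (box l u)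
      = (\<Prod>b\<in>Basis. (u - l) \<bullet> b)"
    by (simp add: emeasure_distr[OF m] pre lborel.emeasure_pair_measure_Times Basis_complex_def
        ennreal_mult)
qed simp

lemma nn_integral_lborel_complex:
  fixes f :: "complex \<Rightarrow> ennreal"
  assumes [measurable]: "f \<in> borel_measurable borel"
  shows "(\<integral>\<^sup>+w. f w \<partial>lborel) = (\<integral>\<^sup>+x. \<integral>\<^sup>+y. f (Complex x y) \<partial>lborel \<partial>lborel)"
    and "(\<integral>\<^sup>+w. f w \<partial>lborel) = (\<integral>\<^sup>+y. \<integral>\<^sup>+x. f (Complex x y) \<partial>lborel \<partial>lborel)"
proof -
  have m: "(\<lambda>p::real \<times> real. Complex (fst p) (snd p)) \<in> borel_measurable (lborel \<Otimes>\<^sub>M lborel)"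
    unfolding Complex_eq by measurable
  have mf: "(\<lambda>p::real \<times> real. f (Complex (fst p) (snd p))) \<in> borel_measurable (lborel \<Otimes>\<^sub>M lborel)"
    using measurable_comp[OF m assms] by (simp add: comp_def)
  have pair: "(\<integral>\<^sup>+w. f w \<partial>lborel) = (\<integral>\<^sup>+p. f (Complex (fst p) (snd p)) \<partial>(lborel \<Otimes>\<^sub>M lborel))"
    by (subst lborel_complex_eq_distr_pair) (simp add: nn_integral_distr[OF m])
  show "(\<integral>\<^sup>+w. f w \<partial>lborel) = (\<integral>\<^sup>+x. \<integral>\<^sup>+y. f (Complex x y) \<partial>lborel \<partial>lborel)"
    using lborel.nn_integral_fst[OF mf] by (simp add: pair)
  show "(\<integral>\<^sup>+w. f w \<partial>lborel) = (\<integral>\<^sup>+y. \<integral>\<^sup>+x. f (Complex x y) \<partial>lborel \<partial>lborel)"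
    using lborel_pair.nn_integral_snd[OF mf] by (simp add: pair case_prod_beta)
qed

lemma nn_integral_cbox_complex:
  fixes f :: "complex \<Rightarrow> ennreal" and a b c d :: real
  assumes [measurable]: "f \<in> borel_measurable borel"
  defines "Q \<equiv> cbox (Complex a c) (Complex b d)"
  shows "(\<integral>\<^sup>+w. indicator Q w * f w \<partial>lborel)
      = (\<integral>\<^sup>+x. indicator {a..b} x * (\<integral>\<^sup>+y. indicator {c..d} y * f (Complex x y) \<partial>lborel) \<partial>lborel)"
    and "(\<integral>\<^sup>+w. indicator Q w * f w \<partial>lborel)
      = (\<integral>\<^sup>+y. indicator {c..d} y * (\<integral>\<^sup>+x. indicator {a..b} x * f (Complex x y) \<partial>lborel) \<partial>lborel)"
proof -
  have [measurable]: "Q \<in> sets borel"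
    by (simp add: Q_def)
  have [measurable]: "(\<lambda>y. f (Complex x y)) \<in> borel_measurable borel"
    and [measurable]: "(\<lambda>x. f (Complex x y)) \<in> borel_measurable borel" for x y
    unfolding Complex_eq by measurable measurable
  have ind: "indicator Q (Complex x y) = (indicator {a..b} x * indicator {c..d} y :: ennreal)" for x y
    by (simp add: Q_def in_cbox_complex_iff indicator_def)
  show "(\<integral>\<^sup>+w. indicator Q w * f w \<partial>lborel)
      = (\<integral>\<^sup>+x. indicator {a..b} x * (\<integral>\<^sup>+y. indicator {c..d} y * f (Complex x y) \<partial>lborel) \<partial>lborel)"
    by (subst nn_integral_lborel_complex(1)) (auto simp: ind intro!: nn_integral_cong split: split_indicator)
  show "(\<integral>\<^sup>+w. indicator Q w * f w \<partial>lborel)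
      = (\<integral>\<^sup>+y. indicator {c..d} y * (\<integral>\<^sup>+x. indicator {a..b} x * f (Complex x y) \<partial>lborel) \<partial>lborel)"
    by (subst nn_integral_lborel_complex(2)) (auto simp: ind intro!: nn_integral_cong split: split_indicator)
qed

lemma ennreal_integral_le_nn_integral:
  fixes h :: "real \<Rightarrow> real"
  assumes "continuous_on {a..b} h" "\<And>x. 0 \<le> h x" "{a..b} \<subseteq> A"
  shows "ennreal (integral {a..b} h) \<le> (\<integral>\<^sup>+x. indicator A x * ennreal (h x) \<partial>lborel)"
proof -
  have "(h has_integral integral {a..b} h) {a..b}"
    using assms(1) by (intro integrable_integral integrable_continuous_interval)
  then have "ennreal (integral {a..b} h) = (\<integral>\<^sup>+x. ennreal (h x) * indicator {a..b} x \<partial>lborel)"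
    using assms(2) by (simp add: nn_integral_has_integral_lebesgue')
  also have "\<dots> \<le> (\<integral>\<^sup>+x. indicator A x * ennreal (h x) \<partial>lborel)"
    using assms(3) by (intro nn_integral_mono) (auto simp: indicator_def)
  finally show ?thesis .
qed

lemma nn_integral_centered_interval_affine:
  fixes F :: "real \<Rightarrow> ennreal"
  assumes [measurable]: "F \<in> borel_measurable borel" and c: "\<bar>c\<bar> = 1"
  shows "(\<integral>\<^sup>+s. indicator {-r..r} s * F (t + c * s) \<partial>lborel) = (\<integral>\<^sup>+x. indicator {t - r..t + r} x * F x \<partial>lborel)"
proof -
  have "(\<integral>\<^sup>+x. indicator {t - r..t + r} x * F x \<partial>lborel)
      = \<bar>c\<bar> * (\<integral>\<^sup>+s. indicator {t - r..t + r} (t + c * s) * F (t + c * s) \<partial>lborel)"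
    using c by (intro nn_integral_real_affine) auto
  also have "\<dots> = (\<integral>\<^sup>+s. indicator {-r..r} s * F (t + c * s) \<partial>lborel)"
    using c by (auto intro!: nn_integral_cong simp: indicator_def abs_if split: if_splits)
  finally show ?thesis ..
qed

lemma borel_measurable_nn_integral_Complex:
  fixes f :: "complex \<Rightarrow> ennreal"
  assumes [measurable]: "f \<in> borel_measurable borel" "A \<in> sets borel"
  shows "(\<lambda>x. \<integral>\<^sup>+y. indicator A y * f (Complex x y) \<partial>lborel) \<in> borel_measurable borel"
    and "(\<lambda>y. \<integral>\<^sup>+x. indicator A x * f (Complex x y) \<partial>lborel) \<in> borel_measurable borel"
proof -
  have "(\<lambda>p::real \<times> real. indicator A (snd p) * f (Complex (fst p) (snd p))) \<in> borel_measurable (borel \<Otimes>\<^sub>M lborel)"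
    unfolding Complex_eq by measurable
  from lborel.borel_measurable_nn_integral_fst[OF this]
  show "(\<lambda>x. \<integral>\<^sup>+y. indicator A y * f (Complex x y) \<partial>lborel) \<in> borel_measurable borel"
    by simp
  have "(\<lambda>p::real \<times> real. indicator A (snd p) * f (Complex (snd p) (fst p))) \<in> borel_measurable (borel \<Otimes>\<^sub>M lborel)"
    unfolding Complex_eq by measurable
  from lborel.borel_measurable_nn_integral_fst[OF this]
  show "(\<lambda>y. \<integral>\<^sup>+x. indicator A x * f (Complex x y) \<partial>lborel) \<in> borel_measurable borel"
    by simp
qed

lemma norm_le_nn_integrals_square_boundary:
  fixes \<phi> :: "complex \<Rightarrow> complex"
  assumes holo: "\<phi> holomorphic_on UNIV" and s: "0 < s" "s \<le> r"
  shows "ennreal (2 * pi * s * cmod (\<phi> z)) \<le>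
      (\<integral>\<^sup>+x. indicator {Re z - r..Re z + r} x * ennreal (cmod (\<phi> (Complex x (Im z - s)))) \<partial>lborel)
    + (\<integral>\<^sup>+x. indicator {Re z - r..Re z + r} x * ennreal (cmod (\<phi> (Complex x (Im z + s)))) \<partial>lborel)
    + (\<integral>\<^sup>+y. indicator {Im z - r..Im z + r} y * ennreal (cmod (\<phi> (Complex (Re z + s) y))) \<partial>lborel)
    + (\<integral>\<^sup>+y. indicator {Im z - r..Im z + r} y * ennreal (cmod (\<phi> (Complex (Re z - s) y))) \<partial>lborel)"
proof -
  have cphi: "continuous_on UNIV \<phi>"
    using holo by (rule holomorphic_on_imp_continuous_on)
  have horiz: "continuous_on A (\<lambda>x. cmod (\<phi> (Complex x c)))"
    and vert: "continuous_on A (\<lambda>y. cmod (\<phi> (Complex c y)))" for A c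
    by (auto simp: Complex_eq intro!: continuous_intros continuous_on_compose2[OF cphi])
  have nonneg: "0 \<le> integral {a..b} (\<lambda>x. cmod (\<phi> (Complex x c)))"
    "0 \<le> integral {a..b} (\<lambda>y. cmod (\<phi> (Complex c y)))" for a b c
    by (intro integral_nonneg integrable_continuous_interval horiz vert; simp)+
  have "ennreal (2 * pi * s * cmod (\<phi> z)) \<le> ennreal (integral {Re z - s..Re z + s} (\<lambda>x. cmod (\<phi> (Complex x (Im z - s))))
      + integral {Re z - s..Re z + s} (\<lambda>x. cmod (\<phi> (Complex x (Im z + s))))
      + integral {Im z - s..Im z + s} (\<lambda>y. cmod (\<phi> (Complex (Re z + s) y)))
      + integral {Im z - s..Im z + s} (\<lambda>y. cmod (\<phi> (Complex (Re z - s) y))))"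
    by (intro ennreal_leI norm_le_integrals_square_boundary holo s)
  also have "\<dots> \<le>
      (\<integral>\<^sup>+x. indicator {Re z - r..Re z + r} x * ennreal (cmod (\<phi> (Complex x (Im z - s)))) \<partial>lborel)
    + (\<integral>\<^sup>+x. indicator {Re z - r..Re z + r} x * ennreal (cmod (\<phi> (Complex x (Im z + s)))) \<partial>lborel)
    + (\<integral>\<^sup>+y. indicator {Im z - r..Im z + r} y * ennreal (cmod (\<phi> (Complex (Re z + s) y))) \<partial>lborel)
    + (\<integral>\<^sup>+y. indicator {Im z - r..Im z + r} y * ennreal (cmod (\<phi> (Complex (Re z - s) y))) \<partial>lborel)"
    using s nonneg
    by (simp add: ennreal_plus del: ennreal_plus_if)
       (intro add_mono ennreal_integral_le_nn_integral horiz vert; simp)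
  finally show ?thesis .
qed

lemma nn_integral_sweep_square_boundary:
  fixes f :: "complex \<Rightarrow> ennreal" and z :: complex and r :: real
  assumes [measurable]: "f \<in> borel_measurable borel"
  defines "H \<equiv> \<lambda>y. \<integral>\<^sup>+x. indicator {Re z - r..Re z + r} x * f (Complex x y) \<partial>lborel"
    and "V \<equiv> \<lambda>x. \<integral>\<^sup>+y. indicator {Im z - r..Im z + r} y * f (Complex x y) \<partial>lborel"
  shows "(\<integral>\<^sup>+s. indicator {-r..r} s * (H (Im z - s) + H (Im z + s) + V (Re z + s) + V (Re z - s)) \<partial>lborel)
    = 4 * (\<integral>\<^sup>+w. indicator (cbox (Complex (Re z - r) (Im z - r)) (Complex (Re z + r) (Im z + r))) w * f w \<partial>lborel)"
proof -
  define J where "J = (\<integral>\<^sup>+w. indicator (cbox (Complex (Re z - r) (Im z - r)) (Complex (Re z + r) (Im z + r))) w * f w \<partial>lborel)"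
  have mH: "H \<in> borel_measurable borel" and mV: "V \<in> borel_measurable borel"
    unfolding H_def V_def by (intro borel_measurable_nn_integral_Complex; simp)+
  have JH: "J = (\<integral>\<^sup>+y. indicator {Im z - r..Im z + r} y * H y \<partial>lborel)"
    unfolding J_def H_def by (rule nn_integral_cbox_complex(2)) measurable
  have JV: "J = (\<integral>\<^sup>+x. indicator {Re z - r..Re z + r} x * V x \<partial>lborel)"
    unfolding J_def V_def by (rule nn_integral_cbox_complex(1)) measurable
  have shifted_H: "(\<integral>\<^sup>+s. indicator {-r..r} s * H (Im z - s) \<partial>lborel) = J"
    "(\<integral>\<^sup>+s. indicator {-r..r} s * H (Im z + s) \<partial>lborel) = J"
    unfolding JH
    using nn_integral_centered_interval_affine[OF mH, of "-1" r "Im z"]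
      nn_integral_centered_interval_affine[OF mH, of 1 r "Im z"]
    by simp_all
  have shifted_V: "(\<integral>\<^sup>+s. indicator {-r..r} s * V (Re z + s) \<partial>lborel) = J"
    "(\<integral>\<^sup>+s. indicator {-r..r} s * V (Re z - s) \<partial>lborel) = J"
    unfolding JV
    using nn_integral_centered_interval_affine[OF mV, of 1 r "Re z"]
      nn_integral_centered_interval_affine[OF mV, of "-1" r "Re z"]
    by simp_all
  have "(\<integral>\<^sup>+s. indicator {-r..r} s * (H (Im z - s) + H (Im z + s) + V (Re z + s) + V (Re z - s)) \<partial>lborel)
      = J + J + J + J"
    using mH mV by (simp add: distrib_left nn_integral_add shifted_H shifted_V)
  also have "\<dots> = 4 * J"
  proof -
    have "(4::ennreal) = 1 + 1 + 1 + 1"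
      by simp
    then show ?thesis
      by (simp only: distrib_right mult_1)
  qed
  finally show ?thesis
    by (simp add: J_def)
qed

lemma norm_le_nn_integral_square:
  fixes \<phi> :: "complex \<Rightarrow> complex" and z :: complex and r :: real
  assumes holo: "\<phi> holomorphic_on UNIV" and r: "0 < r"
  shows "ennreal (pi * r\<^sup>2 / 2 * cmod (\<phi> z)) \<le>
    4 * (\<integral>\<^sup>+w. indicator (cbox (Complex (Re z - r) (Im z - r)) (Complex (Re z + r) (Im z + r))) w
      * ennreal (cmod (\<phi> w)) \<partial>lborel)"
proof -
  define H where "H y = (\<integral>\<^sup>+x. indicator {Re z - r..Re z + r} x * ennreal (cmod (\<phi> (Complex x y))) \<partial>lborel)" for y
  define V where "V x = (\<integral>\<^sup>+y. indicator {Im z - r..Im z + r} y * ennreal (cmod (\<phi> (Complex x y))) \<partial>lborel)" for x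
  have [measurable]: "\<phi> \<in> borel_measurable borel"
    using holo by (intro borel_measurable_continuous_onI holomorphic_on_imp_continuous_on)
  have pointwise: "indicator {r/2..r} s * ennreal (pi * r * cmod (\<phi> z))
      \<le> indicator {-r..r} s * (H (Im z - s) + H (Im z + s) + V (Re z + s) + V (Re z - s))" for s
  proof (cases "s \<in> {r/2..r}")
    case True
    then have "ennreal (pi * r * cmod (\<phi> z)) \<le> ennreal (2 * pi * s * cmod (\<phi> z))"
      by (intro ennreal_leI mult_right_mono) auto
    also have "\<dots> \<le> H (Im z - s) + H (Im z + s) + V (Re z + s) + V (Re z - s)"
      unfolding H_def V_def using True r by (intro norm_le_nn_integrals_square_boundary holo) auto
    finally show ?thesis
      using True r by (simp add: indicator_def)
  qed simp
  have "ennreal (pi * r\<^sup>2 / 2 * cmod (\<phi> z)) = (\<integral>\<^sup>+s. indicator {r/2..r} s * ennreal (pi * r * cmod (\<phi> z)) \<partial>lborel)"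
    using r by (simp add: nn_integral_multc ennreal_mult'[symmetric] power2_eq_square)
  also have "\<dots> \<le> (\<integral>\<^sup>+s. indicator {-r..r} s * (H (Im z - s) + H (Im z + s) + V (Re z + s) + V (Re z - s)) \<partial>lborel)"
    using pointwise by (rule nn_integral_mono)
  also have "\<dots> = 4 * (\<integral>\<^sup>+w. indicator (cbox (Complex (Re z - r) (Im z - r)) (Complex (Re z + r) (Im z + r))) w
      * ennreal (cmod (\<phi> w)) \<partial>lborel)"
    unfolding H_def V_def by (rule nn_integral_sweep_square_boundary) measurable
  finally show ?thesis .
qed

lemma le_exp_half_square_mult:
  fixes x m R :: real
  assumes "0 \<le> x" "0 \<le> m" "m \<le> R"
  shows "x \<le> exp (R\<^sup>2 / 2) / 2 * (x\<^sup>2 * exp (- m\<^sup>2) + 1)"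
proof -
  define A where "A = x * exp (- m\<^sup>2 / 2)"
  have "x = A * exp (m\<^sup>2 / 2)"
    by (simp add: A_def mult.assoc exp_add [symmetric])
  also have "\<dots> \<le> A * exp (R\<^sup>2 / 2)"
    using assms by (auto simp: A_def intro!: mult_left_mono power_mono)
  also have "\<dots> \<le> exp (R\<^sup>2 / 2) / 2 * (A\<^sup>2 + 1)"
  proof -
    have "exp (R\<^sup>2 / 2) / 2 * (A\<^sup>2 + 1) - A * exp (R\<^sup>2 / 2) = exp (R\<^sup>2 / 2) / 2 * (A - 1)\<^sup>2"
      by (simp add: power2_eq_square field_simps)
    moreover have "0 \<le> exp (R\<^sup>2 / 2) / 2 * (A - 1)\<^sup>2"
      by simp
    ultimately show ?thesis
      by linarith
  qed
  also have "A\<^sup>2 = x\<^sup>2 * exp (- m\<^sup>2)"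
    by (simp add: A_def power_mult_distrib power2_eq_square exp_add [symmetric])
  finally show ?thesis .
qed

lemma nn_integral_norm_le_weighted_square:
  fixes \<phi> :: "complex \<Rightarrow> complex"
  assumes [measurable]: "\<phi> \<in> borel_measurable borel" "Q \<in> sets borel"
    and bounded: "\<And>w. w \<in> Q \<Longrightarrow> cmod w \<le> R"
  shows "(\<integral>\<^sup>+w. indicator Q w * ennreal (cmod (\<phi> w)) \<partial>lborel)
    \<le> ennreal (exp (R\<^sup>2 / 2) / 2) *
      ((\<integral>\<^sup>+w. ennreal ((cmod (\<phi> w))\<^sup>2 * exp (- (cmod w)\<^sup>2)) \<partial>lborel) + emeasure lborel Q)"
proof -
  define g where "g w = (cmod (\<phi> w))\<^sup>2 * exp (- (cmod w)\<^sup>2)" for w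
  have "(\<integral>\<^sup>+w. indicator Q w * ennreal (cmod (\<phi> w)) \<partial>lborel)
      \<le> (\<integral>\<^sup>+w. ennreal (exp (R\<^sup>2 / 2) / 2) * (ennreal (g w) + indicator Q w) \<partial>lborel)"
  proof (rule nn_integral_mono)
    fix w
    show "indicator Q w * ennreal (cmod (\<phi> w)) \<le> ennreal (exp (R\<^sup>2 / 2) / 2) * (ennreal (g w) + indicator Q w)"
    proof (cases "w \<in> Q")
      case True
      then have "ennreal (cmod (\<phi> w)) \<le> ennreal (exp (R\<^sup>2 / 2) / 2 * (g w + 1))"
        unfolding g_def by (intro ennreal_leI le_exp_half_square_mult bounded) auto
      also have "\<dots> = ennreal (exp (R\<^sup>2 / 2) / 2) * (ennreal (g w) + 1)"
        by (subst ennreal_mult) (auto simp: g_def ennreal_plus simp del: ennreal_plus_if)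
      finally show ?thesis
        using True by simp
    qed simp
  qed
  also have "\<dots> = ennreal (exp (R\<^sup>2 / 2) / 2) * ((\<integral>\<^sup>+w. ennreal (g w) \<partial>lborel) + emeasure lborel Q)"
    by (simp add: nn_integral_cmult nn_integral_add g_def)
  finally show ?thesis
    by (simp add: g_def)
qed

lemma norm_le_weighted_square_norm:
  fixes \<phi> :: "complex \<Rightarrow> complex" and r N :: real
  assumes holo: "\<phi> holomorphic_on UNIV" and r: "0 < r" and N0: "0 \<le> N"
    and N: "(\<integral>\<^sup>+w. ennreal ((cmod (\<phi> w))\<^sup>2 * exp (- (cmod w)\<^sup>2)) \<partial>lborel) = ennreal N"
  shows "cmod (\<phi> z) \<le> 4 * (N + 4 * r\<^sup>2) / (pi * r\<^sup>2) * exp ((cmod z + 2 * r)\<^sup>2 / 2)"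
proof -
  define E where "E = exp ((cmod z + 2 * r)\<^sup>2 / 2)"
  define Q where "Q = cbox (Complex (Re z - r) (Im z - r)) (Complex (Re z + r) (Im z + r))"
  have [measurable]: "\<phi> \<in> borel_measurable borel"
    using holo by (intro borel_measurable_continuous_onI holomorphic_on_imp_continuous_on)
  have "cmod w \<le> cmod z + 2 * r" if "w \<in> Q" for w
  proof -
    have "cmod (w - z) \<le> \<bar>Re (w - z)\<bar> + \<bar>Im (w - z)\<bar>"
      by (rule cmod_le)
    also have "\<dots> \<le> 2 * r"
      using that by (auto simp: Q_def in_cbox_complex_iff)
    finally show ?thesis
      using norm_triangle_ineq2[of w z] by simp
  qed
  then have "(\<integral>\<^sup>+w. indicator Q w * ennreal (cmod (\<phi> w)) \<partial>lborel)
      \<le> ennreal (E / 2) * (ennreal N + emeasure lborel Q)"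
    unfolding E_def N[symmetric] by (intro nn_integral_norm_le_weighted_square) (auto simp: Q_def)
  also have "ennreal N + emeasure lborel Q = ennreal (N + 4 * r\<^sup>2)"
    using r N0 by (simp add: Q_def emeasure_lborel_cbox_eq Basis_complex_def power2_eq_square ennreal_plus)
  also have "ennreal (E / 2) * ennreal (N + 4 * r\<^sup>2) = ennreal (E / 2 * (N + 4 * r\<^sup>2))"
    by (rule ennreal_mult[symmetric]) (use N0 in \<open>auto simp: E_def\<close>)
  finally have "4 * (\<integral>\<^sup>+w. indicator Q w * ennreal (cmod (\<phi> w)) \<partial>lborel) \<le> ennreal (4 * (E / 2 * (N + 4 * r\<^sup>2)))"
    using N0 by (subst ennreal_mult) (auto simp: E_def intro: mult_left_mono)
  with norm_le_nn_integral_square[OF holo r, of z]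
  have "ennreal (pi * r\<^sup>2 / 2 * cmod (\<phi> z)) \<le> ennreal (4 * (E / 2 * (N + 4 * r\<^sup>2)))"
    unfolding Q_def by (rule order_trans)
  then have "pi * r\<^sup>2 / 2 * cmod (\<phi> z) \<le> 4 * (E / 2 * (N + 4 * r\<^sup>2))"
    using N0 by (subst (asm) ennreal_le_iff) (auto simp: E_def)
  then show ?thesis
    using r by (simp add: E_def field_simps)
qed

lemma bargmann_growth:
  fixes \<phi> :: "complex \<Rightarrow> complex"
  assumes "\<phi> \<in> bargmann" and c: "0 < c"
  obtains K where "0 \<le> K" "\<And>z. cmod (\<phi> z) \<le> K * exp ((cmod z + c)\<^sup>2 / 2)"
proof -
  have holo: "\<phi> holomorphic_on UNIV"
    and "integrable lborel (\<lambda>w. (cmod (\<phi> w))\<^sup>2 * exp (- (cmod w)\<^sup>2))"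
    using assms(1) by (auto simp: bargmann_def)
  then have "(\<integral>\<^sup>+w. ennreal ((cmod (\<phi> w))\<^sup>2 * exp (- (cmod w)\<^sup>2)) \<partial>lborel) < \<infinity>"
    by (simp add: integrable_iff_bounded)
  then obtain N where N: "(\<integral>\<^sup>+w. ennreal ((cmod (\<phi> w))\<^sup>2 * exp (- (cmod w)\<^sup>2)) \<partial>lborel) = ennreal N"
    and N0: "0 \<le> N"
    by (cases "\<integral>\<^sup>+w. ennreal ((cmod (\<phi> w))\<^sup>2 * exp (- (cmod w)\<^sup>2)) \<partial>lborel" rule: ennreal_cases) auto
  show thesis
  proof (rule that)
    show "0 \<le> 4 * (N + 4 * (c / 2)\<^sup>2) / (pi * (c / 2)\<^sup>2)"
      using N0 by simp
    show "cmod (\<phi> z) \<le> 4 * (N + 4 * (c / 2)\<^sup>2) / (pi * (c / 2)\<^sup>2) * exp ((cmod z + c)\<^sup>2 / 2)" for z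
      using norm_le_weighted_square_norm[OF holo _ N0 N, of "c / 2" z] c by simp
  qed
qed

lemma bargmann_deriv_growth:
  fixes \<phi> :: "complex \<Rightarrow> complex"
  assumes "\<phi> \<in> bargmann" and c: "0 < c"
  obtains K where "0 \<le> K" "\<And>z. cmod (deriv \<phi> z) \<le> K * exp ((cmod z + c)\<^sup>2 / 2)"
proof -
  have holo: "\<phi> holomorphic_on UNIV"
    using assms(1) by (simp add: bargmann_def)
  obtain K where K0: "0 \<le> K" and K: "\<And>z. cmod (\<phi> z) \<le> K * exp ((cmod z + c / 2)\<^sup>2 / 2)"
    using bargmann_growth[OF assms(1), of "c / 2"] c by auto
  have "cmod (deriv \<phi> z) \<le> 2 * K / c * exp ((cmod z + c)\<^sup>2 / 2)" for z
  proof -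
    have "cmod ((deriv ^^ 1) \<phi> z) \<le> fact 1 * (K * exp ((cmod z + c)\<^sup>2 / 2)) / (c / 2) ^ 1"
    proof (rule Cauchy_inequality)
      show "\<phi> holomorphic_on ball z (c / 2)"
        using holo by (rule holomorphic_on_subset) auto
      show "continuous_on (cball z (c / 2)) \<phi>"
        using holomorphic_on_imp_continuous_on[OF holo] continuous_on_subset by blast
    next
      fix w
      assume "cmod (z - w) = c / 2"
      then have "cmod w + c / 2 \<le> cmod z + c"
        using norm_triangle_ineq2[of w z] by (simp add: norm_minus_commute)
      then have "exp ((cmod w + c / 2)\<^sup>2 / 2) \<le> exp ((cmod z + c)\<^sup>2 / 2)"
        using c by (auto intro!: divide_right_mono power_mono)
      then show "cmod (\<phi> w) \<le> K * exp ((cmod z + c)\<^sup>2 / 2)"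
        using K[of w] K0 by (meson mult_left_mono order_trans)
    qed (use c in auto)
    then show ?thesis
      using c by (simp add: field_simps)
  qed
  then show thesis
    using that[of "2 * K / c"] K0 c by simp
qed

lemma norm_gaussian_vertical_le:
  fixes f :: "complex \<Rightarrow> complex" and a y \<rho> c K :: real
  assumes f: "\<And>z. cmod (f z) \<le> K * exp ((cmod z + c)\<^sup>2 / 2)"
    and K: "0 \<le> K" and c: "0 \<le> c" and y: "y \<le> 0"
  shows "cmod (exp (- ((of_real y - (of_real \<rho> + \<i> * of_real a))\<^sup>2) / 2) * f (of_real a + \<i> * of_real y))
    \<le> K * exp (a\<^sup>2 + c * \<bar>a\<bar> + c\<^sup>2 / 2) * exp ((\<rho> - c) * y)"
proof -
  define m where "m = cmod (of_real a + \<i> * of_real y)"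
  have m2: "m\<^sup>2 = a\<^sup>2 + y\<^sup>2"
    unfolding m_def by (simp add: cmod_power2)
  have "m \<le> \<bar>a\<bar> - y"
    unfolding m_def using cmod_le[of "of_real a + \<i> * of_real y"] y by simp
  then have "c * m \<le> c * (\<bar>a\<bar> - y)"
    using c by (rule mult_left_mono)
  moreover have "- ((y - \<rho>)\<^sup>2 - a\<^sup>2) / 2 + (m + c)\<^sup>2 / 2
      = (m\<^sup>2 - a\<^sup>2 - y\<^sup>2) / 2 + \<rho> * y - \<rho>\<^sup>2 / 2 + a\<^sup>2 + c * m + c\<^sup>2 / 2"
    by (simp add: power2_eq_square field_simps)
  ultimately have exponent: "- ((y - \<rho>)\<^sup>2 - a\<^sup>2) / 2 + (m + c)\<^sup>2 / 2 \<le> a\<^sup>2 + c * \<bar>a\<bar> + c\<^sup>2 / 2 + (\<rho> - c) * y"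
    using m2 by (simp add: algebra_simps) (use zero_le_power2[of \<rho>] in linarith)
  have norm_gauss: "cmod (exp (- ((of_real y - (of_real \<rho> + \<i> * of_real a))\<^sup>2) / 2))
      = exp (- ((y - \<rho>)\<^sup>2 - a\<^sup>2) / 2)"
    by (simp add: norm_exp_eq_Re power2_eq_square algebra_simps)
  have "cmod (exp (- ((of_real y - (of_real \<rho> + \<i> * of_real a))\<^sup>2) / 2) * f (of_real a + \<i> * of_real y))
      = exp (- ((y - \<rho>)\<^sup>2 - a\<^sup>2) / 2) * cmod (f (of_real a + \<i> * of_real y))"
    by (simp only: norm_mult norm_gauss)
  also have "\<dots> \<le> exp (- ((y - \<rho>)\<^sup>2 - a\<^sup>2) / 2) * (K * exp ((m + c)\<^sup>2 / 2))"
    unfolding m_def by (intro mult_left_mono f) simp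
  also have "\<dots> = K * exp (- ((y - \<rho>)\<^sup>2 - a\<^sup>2) / 2 + (m + c)\<^sup>2 / 2)"
    by (simp add: exp_add)
  also have "\<dots> \<le> K * exp (a\<^sup>2 + c * \<bar>a\<bar> + c\<^sup>2 / 2 + (\<rho> - c) * y)"
    using exponent K by (intro mult_left_mono) auto
  finally show ?thesis
    by (simp add: exp_add mult.assoc)
qed

lemma tendsto_zero_at_bot_exp_bound:
  fixes f :: "real \<Rightarrow> 'a::real_normed_vector"
  assumes t: "0 < t" and bound: "\<And>y. y \<le> b \<Longrightarrow> norm (f y) \<le> C * exp (t * y)"
  shows "(f \<longlongrightarrow> 0) at_bot"
proof (rule Lim_null_comparison)
  show "\<forall>\<^sub>F y in at_bot. norm (f y) \<le> C * exp (t * y)"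
    using bound by (auto simp: eventually_at_bot_linorder)
  have "filterlim (\<lambda>y. t * y) at_bot at_bot"
    by (rule filterlim_tendsto_pos_mult_at_bot[OF tendsto_const t filterlim_ident])
  then have "((\<lambda>y. exp (t * y)) \<longlongrightarrow> 0) at_bot"
    by (rule filterlim_compose[OF exp_at_bot])
  then show "((\<lambda>y. C * exp (t * y)) \<longlongrightarrow> 0) at_bot"
    by (rule tendsto_mult_right_zero)
qed

lemma set_integrable_exp_atMost:
  fixes t b :: real
  assumes t: "0 < t"
  shows "set_integrable lborel {..b} (\<lambda>u. exp (t * u))"
proof -
  have "((\<lambda>v. exp (- t * v)) has_integral integral {0..} (\<lambda>v. exp (- t * v))) {0..}"
    using integrable_on_exp_minus_to_infinity[OF t, of 0] by blast
  then have I: "(\<integral>\<^sup>+v. ennreal (exp (- t * v)) * indicator {0..} v \<partial>lborel)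
      = ennreal (integral {0..} (\<lambda>v. exp (- t * v)))"
    by (rule nn_integral_has_integral_lebesgue'[rotated]) simp
  have "(\<integral>\<^sup>+u. ennreal (exp (t * u)) * indicator {..b} u \<partial>lborel)
      = (\<integral>\<^sup>+v. ennreal (exp (t * (b + (-1) * v))) * indicator {..b} (b + (-1) * v) \<partial>lborel)"
    using nn_integral_real_affine[where c = "-1::real" and t = b,
        of "\<lambda>u. ennreal (exp (t * u)) * indicator {..b} u"]
    by simp
  also have "\<dots> = (\<integral>\<^sup>+v. ennreal (exp (t * b)) * (ennreal (exp (- t * v)) * indicator {0..} v) \<partial>lborel)"
    by (intro nn_integral_cong)
       (simp add: indicator_def ennreal_mult'[symmetric] exp_add[symmetric] algebra_simps)
  also have "\<dots> = ennreal (exp (t * b)) * ennreal (integral {0..} (\<lambda>v. exp (- t * v)))"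
    using I by (subst nn_integral_cmult) auto
  finally have "(\<integral>\<^sup>+u. ennreal (exp (t * u)) * indicator {..b} u \<partial>lborel) < \<infinity>"
    by (simp add: ennreal_mult'[symmetric])
  moreover have "(\<integral>\<^sup>+u. ennreal (norm (indicat_real {..b} u *\<^sub>R exp (t * u))) \<partial>lborel)
      = (\<integral>\<^sup>+u. ennreal (exp (t * u)) * indicator {..b} u \<partial>lborel)"
    by (intro nn_integral_cong) (simp add: indicator_def)
  ultimately show ?thesis
    unfolding set_integrable_def integrable_iff_bounded by simp
qed

lemma set_integrable_atMost_exp_bound:
  fixes f :: "real \<Rightarrow> 'a::{banach, second_countable_topology}"
  assumes [measurable]: "f \<in> borel_measurable borel"
    and t: "0 < t" and bound: "\<And>u. u \<le> b \<Longrightarrow> norm (f u) \<le> C * exp (t * u)"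
  shows "set_integrable lborel {..b} f"
proof (rule set_integrable_bound)
  show "set_integrable lborel {..b} (\<lambda>u. C * exp (t * u))"
    using set_integrable_exp_atMost[OF t] by (rule set_integrable_mult_right)
  show "set_borel_measurable lborel {..b} f"
    unfolding set_borel_measurable_def by measurable
  show "AE u in lborel. u \<in> {..b} \<longrightarrow> norm (f u) \<le> norm (C * exp (t * u))"
    using bound by (intro AE_I2) (force intro: order_trans abs_ge_self)
qed

lemma set_integral_atMost_eq_of_tendsto_at_bot:
  fixes F f :: "real \<Rightarrow> 'a::euclidean_space"
  assumes deriv: "\<And>x. (F has_vector_derivative f x) (at x)"
    and lim: "(F \<longlongrightarrow> 0) at_bot" and int: "set_integrable lborel {..b} f"
  shows "(LBINT x:{..b}. f x) = F b"
proof -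
  have ftc: "(LBINT x:{a..b}. f x) = F b - F a" if "a \<le> b" for a
  proof -
    have "(f has_integral F b - F a) {a..b}"
      using that deriv by (intro fundamental_theorem_of_calculus) (auto intro: has_vector_derivative_at_within)
    moreover have "set_integrable lborel {a..b} f"
      by (rule set_integrable_subset[OF int]) auto
    ultimately show ?thesis
      by (simp add: set_borel_integral_eq_integral(2) integral_unique)
  qed
  have "((\<lambda>a. LBINT x:{a..b}. f x) \<longlongrightarrow> (LBINT x:{..b}. f x)) at_bot"
    by (rule tendsto_set_lebesgue_integral_at_bot[OF _ int]) simp
  moreover have "((\<lambda>a. LBINT x:{a..b}. f x) \<longlongrightarrow> F b - 0) at_bot"
  proof (rule Lim_transform_eventually)
    show "((\<lambda>a. F b - F a) \<longlongrightarrow> F b - 0) at_bot"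
      by (intro tendsto_intros lim)
    show "\<forall>\<^sub>F a in at_bot. F b - F a = (LBINT x:{a..b}. f x)"
      unfolding eventually_at_bot_linorder by (intro exI[of _ b] allI impI) (simp add: ftc)
  qed
  ultimately show ?thesis
    using tendsto_unique[OF trivial_limit_at_bot_linorder] by fastforce
qed

lemma has_vector_derivative_vertical_line:
  fixes \<phi> :: "complex \<Rightarrow> complex" and a y :: real
  assumes holo: "\<phi> holomorphic_on UNIV"
  shows "((\<lambda>y. \<phi> (of_real a + \<i> * of_real y)) has_vector_derivative
      \<i> * deriv \<phi> (of_real a + \<i> * of_real y)) (at y)"
proof -
  have "(\<phi> has_field_derivative deriv \<phi> (of_real a + \<i> * of_real y)) (at (of_real a + \<i> * of_real y))"
    using holo by (rule holomorphic_derivI) auto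
  moreover have "((\<lambda>x. of_real a + \<i> * x) has_field_derivative \<i>) (at (of_real y))"
    by (auto intro!: derivative_eq_intros)
  ultimately have "((\<lambda>x. \<phi> (of_real a + \<i> * x)) has_field_derivative
      deriv \<phi> (of_real a + \<i> * of_real y) * \<i>) (at (of_real y))"
    by (rule DERIV_chain2)
  from has_vector_derivative_real_field[OF this] show ?thesis
    by (simp add: mult.commute)
qed

lemma eigenfunction_weighted_vertical_derivative:
  fixes mu lam a y :: real and \<sigma>t :: complex and \<phi> :: "complex \<Rightarrow> complex"
  assumes holo: "\<phi> holomorphic_on UNIV" and lam: "lam \<noteq> 0" and a: "a \<noteq> 0"
    and eigen: "\<And>z. H_op mu lam \<phi> z = \<sigma>t * \<phi> z"
  defines "\<gamma> \<equiv> of_real (mu / lam) + \<i> * of_real a" and "w \<equiv> of_real a + \<i> * of_real y"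
  shows "((\<lambda>y. exp (- ((of_real y - \<gamma>)\<^sup>2) / 2) * (\<i> * deriv \<phi> (of_real a + \<i> * of_real y)))
      has_vector_derivative \<i> * (\<sigma>t / of_real lam) * (exp (- ((of_real y - \<gamma>)\<^sup>2) / 2) * \<phi> w / w)) (at y)"
proof -
  have "(deriv \<phi> has_field_derivative deriv (deriv \<phi>) w) (at w)"
    using holo by (intro holomorphic_derivI[of _ UNIV] holomorphic_deriv) auto
  moreover have "((\<lambda>x. of_real a + \<i> * x) has_field_derivative \<i>) (at (of_real y))"
    by (auto intro!: derivative_eq_intros)
  ultimately have "((\<lambda>x. deriv \<phi> (of_real a + \<i> * x)) has_field_derivative deriv (deriv \<phi>) w * \<i>)
      (at (of_real y))"
    unfolding w_def by (rule DERIV_chain2)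
  then have dD: "((\<lambda>x. \<i> * deriv \<phi> (of_real a + \<i> * x)) has_field_derivative \<i> * (deriv (deriv \<phi>) w * \<i>))
      (at (of_real y))"
    by (rule DERIV_cmult)
  have "((\<lambda>x. - ((x - \<gamma>)\<^sup>2) / 2) has_field_derivative - (of_real y - \<gamma>)) (at (of_real y))"
    by (auto intro!: derivative_eq_intros simp: field_simps)
  then have dE: "((\<lambda>x. exp (- ((x - \<gamma>)\<^sup>2) / 2)) has_field_derivative
      exp (- ((of_real y - \<gamma>)\<^sup>2) / 2) * - (of_real y - \<gamma>)) (at (of_real y))"
    by (rule DERIV_chain2[OF DERIV_exp])
  from DERIV_mult[OF dE dD] have dG: "((\<lambda>x. exp (- ((x - \<gamma>)\<^sup>2) / 2) * (\<i> * deriv \<phi> (of_real a + \<i> * x))) has_field_derivative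
      exp (- ((of_real y - \<gamma>)\<^sup>2) / 2) * (- (of_real y - \<gamma>) * (\<i> * deriv \<phi> w) - deriv (deriv \<phi>) w))
      (at (of_real y))"
    by (rule DERIV_cong) (simp add: w_def algebra_simps)
  have ode: "- (of_real y - \<gamma>) * (\<i> * deriv \<phi> w) - deriv (deriv \<phi>) w = \<i> * (\<sigma>t / of_real lam) * (\<phi> w / w)"
  proof -
    have w0: "w \<noteq> 0"
      using a by (auto simp: w_def complex_eq_iff)
    have d2: "deriv (deriv \<phi>) w
        = (\<sigma>t * \<phi> w - of_real mu * w * deriv \<phi> w - \<i> * of_real lam * w\<^sup>2 * deriv \<phi> w) / (\<i> * of_real lam * w)"
      using eigen[of w] w0 lam by (simp add: H_op_def field_simps)
    have y: "of_real y = - \<i> * (w - of_real a)"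
      by (simp add: w_def algebra_simps)
    show ?thesis
      unfolding d2 y \<gamma>_def using w0 lam by (simp add: field_simps power2_eq_square)
  qed
  have "((\<lambda>x. exp (- ((x - \<gamma>)\<^sup>2) / 2) * (\<i> * deriv \<phi> (of_real a + \<i> * x))) has_field_derivative
      \<i> * (\<sigma>t / of_real lam) * (exp (- ((of_real y - \<gamma>)\<^sup>2) / 2) * \<phi> w / w)) (at (of_real y))"
    by (rule DERIV_cong[OF dG]) (simp only: ode, simp add: mult_ac)
  from has_vector_derivative_real_field[OF this] show ?thesis
    by simp
qed

lemma bargmann_weighted_vertical_deriv_tendsto:
  fixes \<phi> :: "complex \<Rightarrow> complex" and \<rho> a :: real
  assumes "\<phi> \<in> bargmann" and \<rho>: "0 < \<rho>"
  shows "((\<lambda>y. exp (- ((of_real y - (of_real \<rho> + \<i> * of_real a))\<^sup>2) / 2)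
      * (\<i> * deriv \<phi> (of_real a + \<i> * of_real y))) \<longlongrightarrow> 0) at_bot"
proof -
  obtain K where K: "0 \<le> K" "\<And>z. cmod (deriv \<phi> z) \<le> K * exp ((cmod z + \<rho> / 2)\<^sup>2 / 2)"
    using bargmann_deriv_growth[OF assms(1), of "\<rho> / 2"] \<rho> by auto
  have "\<rho> - \<rho> / 2 = \<rho> / 2"
    by simp
  then have "norm (exp (- ((of_real y - (of_real \<rho> + \<i> * of_real a))\<^sup>2) / 2)
      * (\<i> * deriv \<phi> (of_real a + \<i> * of_real y)))
      \<le> K * exp (a\<^sup>2 + \<rho> / 2 * \<bar>a\<bar> + (\<rho> / 2)\<^sup>2 / 2) * exp (\<rho> / 2 * y)" if "y \<le> 0" for y
    using norm_gaussian_vertical_le[OF K(2) K(1), of y \<rho> a] that \<rho>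
    by (simp add: norm_mult del: norm_exp_eq_Re)
  moreover have "0 < \<rho> / 2"
    using \<rho> by simp
  ultimately show ?thesis
    by (intro tendsto_zero_at_bot_exp_bound)
qed

lemma bargmann_weighted_vertical_set_integrable:
  fixes \<phi> :: "complex \<Rightarrow> complex" and \<rho> a b :: real
  assumes "\<phi> \<in> bargmann" and \<rho>: "0 < \<rho>" and a: "a \<noteq> 0" and b: "b \<le> 0"
  shows "set_integrable lborel {..b} (\<lambda>u. exp (- ((of_real u - (of_real \<rho> + \<i> * of_real a))\<^sup>2) / 2)
      * \<phi> (of_real a + \<i> * of_real u) / (of_real a + \<i> * of_real u))"
proof -
  define E where "E u = exp (- ((of_real u - (of_real \<rho> + \<i> * of_real a))\<^sup>2) / 2)" for u :: real
  define w where "w u = of_real a + \<i> * of_real u" for u :: real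
  define C where "C = a\<^sup>2 + \<rho> / 2 * \<bar>a\<bar> + (\<rho> / 2)\<^sup>2 / 2"
  have w: "\<bar>a\<bar> \<le> cmod (w u)" for u
    using abs_Re_le_cmod[of "w u"] by (simp add: w_def)
  have cphi: "continuous_on UNIV \<phi>"
    using assms(1) by (simp add: bargmann_def holomorphic_on_imp_continuous_on)
  have "continuous_on UNIV (\<lambda>u. E u * \<phi> (w u) / w u)"
    using w a unfolding E_def w_def
    by (intro continuous_intros continuous_on_compose2[OF cphi]) (auto simp: complex_eq_iff)
  moreover obtain K where K: "0 \<le> K" "\<And>z. cmod (\<phi> z) \<le> K * exp ((cmod z + \<rho> / 2)\<^sup>2 / 2)"
    using bargmann_growth[OF assms(1), of "\<rho> / 2"] \<rho> by auto
  have "norm (E u * \<phi> (w u) / w u) \<le> K * exp C / \<bar>a\<bar> * exp (\<rho> / 2 * u)" if "u \<le> b" for u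
  proof -
    have "\<rho> - \<rho> / 2 = \<rho> / 2"
      by simp
    then have "norm (E u * \<phi> (w u)) \<le> K * exp C * exp (\<rho> / 2 * u)"
      using norm_gaussian_vertical_le[OF K(2) K(1), of u \<rho> a] that b \<rho>
      by (simp add: E_def w_def C_def del: norm_exp_eq_Re)
    then have "norm (E u * \<phi> (w u)) / norm (w u) \<le> K * exp C * exp (\<rho> / 2 * u) / \<bar>a\<bar>"
      using w[of u] a K(1) by (intro frac_le) auto
    then show ?thesis
      by (simp add: norm_divide)
  qed
  ultimately show ?thesis
    unfolding E_def w_def using \<rho>
    by (intro set_integrable_atMost_exp_bound[where t = "\<rho> / 2" and C = "K * exp C / \<bar>a\<bar>"]
        borel_measurable_continuous_onI) auto
qed

lemma bargmann_eigenfunction_weighted_vertical_deriv_eq: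
  fixes mu lam a y :: real and \<sigma>t :: complex and \<phi> :: "complex \<Rightarrow> complex"
  assumes lam: "lam \<noteq> 0" and \<rho>: "mu / lam > 0" and bargmann: "\<phi> \<in> bargmann"
    and eigen: "\<And>z. H_op mu lam \<phi> z = \<sigma>t * \<phi> z" and a: "a \<noteq> 0" and y: "y \<le> 0"
  defines "E \<equiv> \<lambda>u::real. exp (- ((of_real u - (of_real (mu / lam) + \<i> * of_real a))\<^sup>2) / 2)"
    and "w \<equiv> \<lambda>u::real. of_real a + \<i> * of_real u"
  shows "E y * (\<i> * deriv \<phi> (w y)) = \<i> * (\<sigma>t / of_real lam) * (LBINT u:{..y}. E u * \<phi> (w u) / w u)"
proof -
  have holo: "\<phi> holomorphic_on UNIV"
    using bargmann by (simp add: bargmann_def)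
  have "(LBINT u:{..y}. \<i> * (\<sigma>t / of_real lam) * (E u * \<phi> (w u) / w u)) = E y * (\<i> * deriv \<phi> (w y))"
  proof (rule set_integral_atMost_eq_of_tendsto_at_bot)
    show "((\<lambda>y. E y * (\<i> * deriv \<phi> (w y))) has_vector_derivative
        \<i> * (\<sigma>t / of_real lam) * (E x * \<phi> (w x) / w x)) (at x)" for x
      using eigenfunction_weighted_vertical_derivative[OF holo lam a eigen, of x]
      by (simp add: E_def w_def)
    show "((\<lambda>y. E y * (\<i> * deriv \<phi> (w y))) \<longlongrightarrow> 0) at_bot"
      using bargmann_weighted_vertical_deriv_tendsto[OF bargmann \<rho>] by (simp add: E_def w_def)
    show "set_integrable lborel {..y} (\<lambda>u. \<i> * (\<sigma>t / of_real lam) * (E u * \<phi> (w u) / w u))"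
      using bargmann_weighted_vertical_set_integrable[OF bargmann \<rho> a y]
      unfolding E_def w_def by (rule set_integrable_mult_right)
  qed
  then show ?thesis
    unfolding set_integral_mult_right by (rule sym)
qed

theorem theorem5p3:
  fixes mu lam a :: real and \<sigma>t :: complex and \<phi> :: "complex \<Rightarrow> complex"
  assumes "lam \<noteq> 0"
    and "mu / lam > 0"
    and "\<phi> \<in> bargmann"
    and "\<And>z. H_op mu lam \<phi> z = \<sigma>t * \<phi> z"
    and "a \<noteq> 0"
  shows "let \<rho> = mu / lam; \<sigma> = \<sigma>t / of_real lam; \<gamma> = of_real \<rho> + \<i> * of_real a;
             \<phi>a = (\<lambda>y::real. \<phi> (of_real a + \<i> * of_real y));
             \<phi>a' = (\<lambda>y::real. vector_derivative \<phi>a (at y))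
         in ((\<lambda>y. exp (- ((of_real y - \<gamma>) ^ 2) / 2) * \<phi>a' y) \<longlongrightarrow> 0) at_bot
          \<and> (\<forall>y\<le>0. \<phi>a' y = \<i> * \<sigma> * exp ((of_real y - \<gamma>) ^ 2 / 2) *
                 (LBINT u:{..y}. exp (- ((of_real u - \<gamma>) ^ 2) / 2) * \<phi>a u / (of_real a + \<i> * of_real u)))"
proof -
  define \<gamma> where "\<gamma> = of_real (mu / lam) + \<i> * of_real a"
  define E where "E y = exp (- ((of_real y - \<gamma>)\<^sup>2) / 2)" for y :: real
  define w where "w y = of_real a + \<i> * of_real y" for y :: real
  have holo: "\<phi> holomorphic_on UNIV"
    using assms(3) by (simp add: bargmann_def)
  have \<phi>a': "vector_derivative (\<lambda>y. \<phi> (w y)) (at y) = \<i> * deriv \<phi> (w y)" for y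
    unfolding w_def by (rule vector_derivative_at[OF has_vector_derivative_vertical_line[OF holo]])
  have "((\<lambda>y. E y * (\<i> * deriv \<phi> (w y))) \<longlongrightarrow> 0) at_bot"
    using bargmann_weighted_vertical_deriv_tendsto[OF assms(3,2)] by (simp add: E_def w_def \<gamma>_def)
  moreover have "\<i> * deriv \<phi> (w y)
      = \<i> * (\<sigma>t / of_real lam) * exp ((of_real y - \<gamma>)\<^sup>2 / 2) * (LBINT u:{..y}. E u * \<phi> (w u) / w u)"
    if "y \<le> 0" for y
  proof -
    have "exp ((of_real y - \<gamma>)\<^sup>2 / 2) * E y = 1"
      by (simp add: E_def exp_add [symmetric])
    then show ?thesis
      using bargmann_eigenfunction_weighted_vertical_deriv_eq[OF assms(1,2,3,4,5) that]
      unfolding E_def [symmetric] w_def [symmetric] \<gamma>_def [symmetric]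
      by (metis (no_types, lifting) mult.assoc mult.left_commute mult_1)
  qed
  ultimately show ?thesis
    unfolding Let_def \<phi>a' w_def [symmetric] E_def [symmetric] \<gamma>_def [symmetric]
    by simp
qed

end
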